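(* Let $\mathbf{X}$ be $\mathbb{R}P^n$ ($n\ge2$) or $\mathrm{Ein}^{p,q}$ ($\min(p,q)\ge2$), $M$ a compact $(G_{\mathbf{X}},\mathbf{X})$-manifold with universal cover $\pi:\tilde M\to M$ and developing map $\mathfrak{D}:\tilde M\to\tilde{\mathbf{X}}$. If $V \subset \tilde{M}$ is a relatively compact maximal chart, then there is an open neighborhood $V' \supset \overline{V}$ of the closure of $V$ in $\tilde M$ in restriction to which $\mathfrak{D}$ is injective.
   Context: $G_{\mathbf{X}}=\mathrm{PGL}(n+1,\mathbb{R})$ resp. $\mathrm{PO}(p+1,q+1)$; $\tilde{\mathbf{X}}$ is $\mathbb{S}^n$ resp. $\widetilde{\mathrm{Ein}}^{p,q}=\mathbb{S}^p\times\mathbb{S}^q$ (isotropic vectors of Euclidean norm 1 in $\mathbb{R}^{p+1,q+1}$), covering $\mathbf{X}$ via $\pi_{\mathbf{X}}$. A hemisphere is $\mathbb{S}^n\cap\{\ell>0\}$, $\ell$ a nonzero linear form; a Minkowski patch of $\widetilde{\mathrm{Ein}}^{p,q}$ is a connected component of $\pi_{\mathbf{X}}^{-1}(\{[w]:B(v,w)\ne0\})$, $v$ isotropic. A maximal chart is an open subset $V\subset\tilde M$ on which both $\pi$ and $\mathfrak{D}$ are injective and such that $\mathfrak{D}(V)$ is a hemisphere of $\mathbb{S}^n$ (projective case) or a Minkowski patch of $\widetilde{\mathrm{Ein}}^{p,q}$ (conformal case). *)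

theory Defs
  imports "HOL-Analysis.Analysis"
begin

definition covering_map :: "'a topology \<Rightarrow> ('a \<Rightarrow> 'b) \<Rightarrow> 'b topology \<Rightarrow> bool" where
  "covering_map E p B \<longleftrightarrow>
     continuous_map E B p \<and> p ` topspace E = topspace B \<and>
     (\<forall>x \<in> topspace B. \<exists>U. openin B U \<and> x \<in> U \<and>
        (\<exists>\<V>. \<Union>\<V> = topspace E \<inter> p -` U \<and> (\<forall>W \<in> \<V>. openin E W) \<and> pairwise disjnt \<V> \<and>
             (\<forall>W \<in> \<V>. homeomorphic_map (subtopology E W) (subtopology B U) p)))"

definition local_homeo_map :: "'a topology \<Rightarrow> 'b topology \<Rightarrow> ('a \<Rightarrow> 'b) \<Rightarrow> bool" where
  "local_homeo_map E Y f \<longleftrightarrow>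
     continuous_map E Y f \<and>
     (\<forall>x \<in> topspace E. \<exists>U. openin E U \<and> x \<in> U \<and> openin Y (f ` U) \<and>
          homeomorphic_map (subtopology E U) (subtopology Y (f ` U)) f)"

definition simply_connected_sp :: "'a topology \<Rightarrow> bool" where
  "simply_connected_sp X \<longleftrightarrow>
     path_connected_space X \<and>
     (\<forall>g. pathin X g \<and> g 0 = g 1 \<longrightarrow>
        homotopic_with (\<lambda>h. h 0 = g 0 \<and> h 1 = g 1) (top_of_set {0..1}) X g (\<lambda>_. g 0))"

text \<open>Data: universal cover Mt of the compact (G,X)-manifold M with covering map p and
developing map D into the model Xt (a subset of a Euclidean space), where Gact is the
group of transformations of Xt lifting G_X.\<close>

definition dev_data ::
  "'m topology \<Rightarrow> 'b topology \<Rightarrow> ('m \<Rightarrow> 'b) \<Rightarrow> ('m \<Rightarrow> 'v::real_normed_vector) \<Rightarrow> 'v set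
    \<Rightarrow> ('v \<Rightarrow> 'v) set \<Rightarrow> bool" where
  "dev_data Mt M p D Xt Gact \<longleftrightarrow>
     compact_space M \<and> connected_space M \<and> Hausdorff_space M \<and> Hausdorff_space Mt \<and>
     covering_map Mt p M \<and> simply_connected_sp Mt \<and>
     local_homeo_map Mt (top_of_set Xt) D \<and>
     (\<forall>\<gamma>. homeomorphic_map Mt Mt \<gamma> \<and> (\<forall>x \<in> topspace Mt. p (\<gamma> x) = p x) \<longrightarrow>
        (\<exists>g \<in> Gact. \<forall>x \<in> topspace Mt. D (\<gamma> x) = g (D x)))"

definition max_chart ::
  "'m topology \<Rightarrow> ('m \<Rightarrow> 'b) \<Rightarrow> ('m \<Rightarrow> 'v) \<Rightarrow> 'v set set \<Rightarrow> 'm set \<Rightarrow> bool" where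
  "max_chart Mt p D Patches V \<longleftrightarrow>
     openin Mt V \<and> inj_on p V \<and> inj_on D V \<and> D ` V \<in> Patches"

section \<open>Projective model: S^n in R^(n+1), group GL(n+1) acting by normalisation\<close>

definition proj_act :: "real^'n^'n \<Rightarrow> real^'n \<Rightarrow> real^'n" where
  "proj_act A v = inverse (norm (A *v v)) *\<^sub>R (A *v v)"

definition proj_group :: "(real^'n \<Rightarrow> real^'n) set" where
  "proj_group = {proj_act A | A. invertible A}"

definition hemispheres :: "(real^'n) set set" where
  "hemispheres = {{v \<in> sphere 0 1. l v > (0::real)} | l. linear l \<and> l \<noteq> (\<lambda>_. 0)}"

section \<open>Conformal model: Ein^{p,q} lifted to S^p x S^q in R^{p+1,q+1}\<close>

text \<open>Coordinates indexed by 'a + 'b with CARD('a) = p+1, CARD('b) = q+1.\<close>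

definition ein_form :: "real^('a::finite + 'b::finite) \<Rightarrow> real^('a + 'b) \<Rightarrow> real" where
  "ein_form v w = (\<Sum>i \<in> range Inl. v $ i * w $ i) - (\<Sum>i \<in> range Inr. v $ i * w $ i)"

definition ein_tilde :: "(real^('a::finite + 'b::finite)) set" where
  "ein_tilde = {v. ein_form v v = 0 \<and> norm v = 1}"

definition ein_group :: "(real^('a::finite + 'b::finite) \<Rightarrow> real^('a + 'b)) set" where
  "ein_group = {proj_act A | A. \<forall>v w. ein_form (A *v v) (A *v w) = ein_form v w}"

definition minkowski_patches :: "(real^('a::finite + 'b::finite)) set set" where
  "minkowski_patches =
     (\<Union>v \<in> {v. v \<noteq> 0 \<and> ein_form v v = 0}. components {w \<in> ein_tilde. ein_form v w \<noteq> 0})"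

end

theory Submission
  imports Defs
begin

text \<open>A local homeomorphism \<open>D\<close> that is injective on an open set \<open>V\<close> stays injective on the
  closure of \<open>V\<close> as soon as \<open>D ` V\<close> is locally connected at its frontier points: two points of the
  closure with the same image have disjoint sheets over a small connected piece of \<open>D ` V\<close> near
  that image, and this piece lifts into \<open>V\<close> through both sheets. Injectivity on the compact closure
  then spreads to a neighbourhood by Wallace's theorem. Hemispheres are locally connected at their
  frontier because two caps of a sphere meet in a connected set (inversion in a point outside both
  makes it convex). For a Minkowski patch in \<open>S\<^sup>p \<times> S\<^sup>q\<close>, a small product of caps meets the patch in
  a union of products of caps, which is connected; when \<open>p, q \<ge> 2\<close> this survives the degenerate
  configuration, where one factor is a cap with its centre removed.\<close>

section \<open>Injectivity of a local homeomorphism near the closure of a chart\<close>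

lemma local_homeo_map_open_image:
  assumes lh: "local_homeo_map E Y f" and W: "openin E W"
  shows "openin Y (f ` W)"
proof (rule openin_subopen[THEN iffD2], intro ballI)
  fix y assume "y \<in> f ` W"
  then obtain x where x: "x \<in> W" "y = f x" by auto
  then have "x \<in> topspace E" using W openin_subset by blast
  then obtain U where U: "openin E U" "x \<in> U" "openin Y (f ` U)"
      "homeomorphic_map (subtopology E U) (subtopology Y (f ` U)) f"
    using lh unfolding local_homeo_map_def by blast
  have "openin (subtopology E U) (W \<inter> U)"
    unfolding openin_subtopology using W by blast
  then have "openin (subtopology Y (f ` U)) (f ` (W \<inter> U))"
    using homeomorphic_map_openness[OF U(4)] U(1) openin_subset
    by (metis inf_le2 topspace_subtopology_subset)
  then have "openin Y (f ` (W \<inter> U))"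
    using U(3) openin_trans_full by blast
  then show "\<exists>T. openin Y T \<and> y \<in> T \<and> T \<subseteq> f ` W"
    using x U by blast
qed

lemma local_homeo_map_locally_injective:
  assumes lh: "local_homeo_map E Y f" and G: "openin E G" "x \<in> G"
  obtains U where "openin E U" "x \<in> U" "U \<subseteq> G" "inj_on f U"
proof -
  obtain U where U: "openin E U" "x \<in> U"
      "homeomorphic_map (subtopology E U) (subtopology Y (f ` U)) f"
    using lh G openin_subset unfolding local_homeo_map_def by blast
  then have "inj_on f U"
    using homeomorphic_imp_injective_map openin_subset by (metis topspace_subtopology_subset)
  then show thesis
    using that[of "U \<inter> G"] U G by (auto intro: inj_on_subset)
qed

lemma openin_pairs_not_identified:
  fixes f :: "'a \<Rightarrow> 'b::metric_space"
  assumes lh: "local_homeo_map E (top_of_set X) f"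
  shows "openin (prod_topology E E)
           {(a, b). a \<in> topspace E \<and> b \<in> topspace E \<and> (a = b \<or> f a \<noteq> f b)}"
    (is "openin _ ?W")
proof (rule openin_subopen[THEN iffD2], intro ballI)
  have cont: "continuous_map E (top_of_set X) f"
    using lh by (simp add: local_homeo_map_def)
  fix ab assume "ab \<in> ?W"
  then obtain a b where ab: "ab = (a, b)" "a \<in> topspace E" "b \<in> topspace E" "a = b \<or> f a \<noteq> f b"
    by auto
  show "\<exists>T. openin (prod_topology E E) T \<and> ab \<in> T \<and> T \<subseteq> ?W"
  proof (cases "a = b")
    case True
    obtain U where U: "openin E U" "a \<in> U" "inj_on f U"
      using local_homeo_map_locally_injective[OF lh openin_topspace ab(2)] by metis
    have "U \<times> U \<subseteq> ?W"
      using U openin_subset[OF U(1)] by (auto dest: inj_onD)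
    then show ?thesis
      using U True ab by (intro exI[of _ "U \<times> U"]) (auto simp: openin_prod_Times_iff)
  next
    case False
    define e where "e = dist (f a) (f b) / 2"
    have e: "e > 0" using False ab by (simp add: e_def)
    define G where "G c = {x \<in> topspace E. f x \<in> X \<inter> ball c e}" for c
    have oG: "openin E (G c)" for c
      unfolding G_def by (rule openin_continuous_map_preimage[OF cont]) (simp add: openin_open_Int)
    have inG: "a \<in> G (f a)" "b \<in> G (f b)"
      using cont ab e by (auto simp: G_def continuous_map_def)
    have "(x, y) \<in> ?W" if "x \<in> G (f a)" "y \<in> G (f b)" for x y
    proof -
      have "dist (f a) (f x) < e" "dist (f b) (f y) < e" "x \<in> topspace E" "y \<in> topspace E"
        using that by (auto simp: G_def)
      moreover have "dist (f a) (f b) \<le> dist (f a) (f x) + dist (f b) (f x)"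
        by (rule dist_triangle2)
      ultimately show ?thesis by (auto simp: e_def)
    qed
    then show ?thesis
      using oG inG ab by (intro exI[of _ "G (f a) \<times> G (f b)"]) (auto simp: openin_prod_Times_iff)
  qed
qed

lemma local_homeo_map_inj_on_neighbourhood_of_compact:
  fixes f :: "'a \<Rightarrow> 'b::metric_space"
  assumes lh: "local_homeo_map E (top_of_set X) f" and K: "compactin E K" "inj_on f K"
  obtains U where "openin E U" "K \<subseteq> U" "inj_on f U"
proof -
  let ?W = "{(a, b). a \<in> topspace E \<and> b \<in> topspace E \<and> (a = b \<or> f a \<noteq> f b)}"
  have "K \<times> K \<subseteq> ?W"
    using K compactin_subset_topspace by (auto dest: inj_onD)
  then obtain U1 U2 where U: "openin E U1" "openin E U2" "K \<subseteq> U1" "K \<subseteq> U2" "U1 \<times> U2 \<subseteq> ?W"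
    using Wallace_theorem_prod_topology[OF K(1) K(1) openin_pairs_not_identified[OF lh]] by blast
  have "inj_on f (U1 \<inter> U2)"
    using U(5) by (auto intro!: inj_onI)
  then show thesis
    using that[of "U1 \<inter> U2"] U by blast
qed

definition locally_connected_along_frontier :: "'a::topological_space set \<Rightarrow> 'a set \<Rightarrow> bool" where
  "locally_connected_along_frontier X H \<longleftrightarrow>
     (\<forall>z \<in> X \<inter> (closure H - H). \<forall>W. openin (top_of_set X) W \<longrightarrow> z \<in> W \<longrightarrow>
        (\<exists>N. openin (top_of_set X) N \<and> z \<in> N \<and> N \<subseteq> W \<and> connected (N \<inter> H)))"

context
  fixes Mt :: "'m topology" and X :: "'v::metric_space set" and D :: "'m \<Rightarrow> 'v" and V :: "'m set"
  assumes Haus: "Hausdorff_space Mt" and lh: "local_homeo_map Mt (top_of_set X) D"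
    and V: "openin Mt V" "inj_on D V"
begin

lemma continuous_map_dev: "continuous_map Mt (top_of_set X) D"
  using lh by (simp add: local_homeo_map_def)

text \<open>Points of \<open>V\<close> close to \<open>w\<close> have images close to \<open>D v\<close>, hence (\<open>D\<close> being injective on \<open>V\<close>)
  lie in a sheet through \<open>v\<close>; Hausdorffness then forces \<open>w = v\<close>.\<close>

lemma closure_of_point_with_chart_image_in_chart:
  assumes w: "w \<in> Mt closure_of V" and v: "v \<in> V" "D w = D v"
  shows "w \<in> V"
proof (rule ccontr)
  assume "w \<notin> V"
  then have "w \<noteq> v" using v by auto
  moreover have wt: "w \<in> topspace Mt" using w by (simp add: in_closure_of)
  moreover have vt: "v \<in> topspace Mt" using v V openin_subset by blast
  ultimately obtain Uw Uv where U: "openin Mt Uw" "openin Mt Uv" "w \<in> Uw" "v \<in> Uv" "disjnt Uw Uv"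
    using Haus unfolding Hausdorff_space_def by blast
  obtain U1 where U1: "openin Mt U1" "v \<in> U1" "U1 \<subseteq> V \<inter> Uv"
    using local_homeo_map_locally_injective[OF lh openin_Int[OF V(1) U(2)]] v(1) U(4) by blast
  define G where "G = Uw \<inter> {x \<in> topspace Mt. D x \<in> D ` U1}"
  have "openin Mt G"
    unfolding G_def using local_homeo_map_open_image[OF lh U1(1)]
    by (intro openin_Int U(1) openin_continuous_map_preimage[OF continuous_map_dev])
  moreover have "w \<in> G"
    using wt U(3) U1(2) v(2) by (auto simp: G_def)
  ultimately have "\<exists>z. z \<in> V \<and> z \<in> G"
    using w unfolding in_closure_of by blast
  then obtain z z' where z: "z \<in> V" "z \<in> Uw" and z': "z' \<in> U1" "D z = D z'"
    unfolding G_def by blast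
  then have "z = z'" using inj_onD[OF V(2) z'(2) z(1)] U1(3) by blast
  then show False using z z' U1(3) U(5) by (auto simp: disjnt_def)
qed

text \<open>A point \<open>p\<close> of the closure of \<open>V\<close> lying in a sheet \<open>U\<close> over a neighbourhood \<open>N\<close> of \<open>D p\<close>:
  the points of \<open>U\<close> over \<open>N \<inter> D ` V\<close> are either in \<open>V\<close> or outside the closure of \<open>V\<close>, which
  splits \<open>N \<inter> D ` V\<close> into two disjoint open pieces; connectedness and \<open>p \<in> Mt closure_of V\<close>
  force all of \<open>N \<inter> D ` V\<close> into the first one.\<close>

lemma connected_chart_image_lifts_to_sheet:
  assumes U: "openin Mt U" "inj_on D U" and N: "openin (top_of_set X) N" "N \<subseteq> D ` U"
    and conn: "connected (N \<inter> D ` V)"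
    and p: "p \<in> U" "p \<in> Mt closure_of V" "D p \<in> N"
  shows "N \<inter> D ` V \<subseteq> D ` (U \<inter> V)" "N \<inter> D ` V \<noteq> {}"
proof -
  let ?H = "N \<inter> D ` V"
  define A where "A = D ` (U \<inter> V)"
  define C where "C = D ` (U - Mt closure_of V)"
  have oA: "openin (top_of_set X) A"
    unfolding A_def by (intro local_homeo_map_open_image[OF lh] openin_Int U(1) V(1))
  have oC: "openin (top_of_set X) C"
    unfolding C_def by (intro local_homeo_map_open_image[OF lh] openin_diff U(1) closedin_closure_of)
  have AC_disj: "A \<inter> C = {}"
    using U(2) closure_of_subset[OF openin_subset[OF V(1)]]
    by (auto simp: A_def C_def dest: inj_onD)
  then have sep: "separatedin (top_of_set X) A C"
    by (simp add: separatedin_open_sets oA oC disjnt_def)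
  have cov: "?H \<subseteq> A \<union> C"
  proof
    fix h assume h: "h \<in> ?H"
    then obtain u where u: "u \<in> U" "h = D u" using N(2) by blast
    moreover obtain v where "v \<in> V" "h = D v" using h by blast
    ultimately have "u \<in> V \<or> u \<notin> Mt closure_of V"
      using closure_of_point_with_chart_image_in_chart by blast
    then show "h \<in> A \<union> C" using u by (auto simp: A_def C_def)
  qed
  have "connectedin (top_of_set X) ?H"
    using conn N(1) openin_subset by (fastforce simp: connectedin_subtopology)
  then have AC: "?H \<subseteq> A \<or> ?H \<subseteq> C"
    using connectedin_subset_separated_union[OF _ sep cov] by blast
  define G where "G = U \<inter> {q \<in> topspace Mt. D q \<in> N}"
  have "openin Mt G"
    unfolding G_def by (intro openin_Int U(1) openin_continuous_map_preimage[OF continuous_map_dev N(1)])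
  moreover have "p \<in> G"
    using p openin_subset[OF U(1)] by (auto simp: G_def)
  ultimately have "\<exists>v. v \<in> V \<and> v \<in> G"
    using p(2) unfolding in_closure_of by blast
  then obtain v where "v \<in> V" "v \<in> U" "D v \<in> N"
    unfolding G_def by blast
  then have "D v \<in> A \<inter> ?H" by (auto simp: A_def)
  with AC AC_disj have "?H \<subseteq> A" by blast
  with \<open>D v \<in> A \<inter> ?H\<close> show "?H \<subseteq> D ` (U \<inter> V)" "?H \<noteq> {}"
    unfolding A_def by blast+
qed

lemma dev_frontier_point:
  assumes "x \<in> Mt closure_of V" "x \<notin> V"
  shows "D x \<in> X \<inter> (closure (D ` V) - D ` V)"
proof -
  have "D x \<notin> D ` V"
    using closure_of_point_with_chart_image_in_chart assms by blast
  moreover have "D x \<in> X"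
    using continuous_map_dev assms(1) by (auto simp: continuous_map_def in_closure_of)
  moreover have "D ` (Mt closure_of V) \<subseteq> closure (D ` V)"
    using continuous_map_image_closure_subset[OF continuous_map_dev]
      closure_of_subtopology_subset[of euclidean X "D ` V"] by (auto simp: euclidean_closure_of)
  ultimately show ?thesis using assms(1) by blast
qed

lemma inj_on_closure_of_chart:
  assumes lc: "locally_connected_along_frontier X (D ` V)"
  shows "inj_on D (Mt closure_of V)"
proof (rule inj_onI, rule ccontr)
  fix x y assume x: "x \<in> Mt closure_of V" and y: "y \<in> Mt closure_of V"
    and eq: "D x = D y" and "x \<noteq> y"
  have "x \<notin> V"
  proof
    assume "x \<in> V"
    then have "y \<in> V" using closure_of_point_with_chart_image_in_chart[OF y] eq by simp
    then show False using \<open>x \<in> V\<close> \<open>x \<noteq> y\<close> eq V(2) by (auto dest: inj_onD)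
  qed
  then have z: "D x \<in> X \<inter> (closure (D ` V) - D ` V)" by (rule dev_frontier_point[OF x])
  have xt: "x \<in> topspace Mt" and yt: "y \<in> topspace Mt"
    using x y by (simp_all add: in_closure_of)
  obtain Ux Uy where U: "openin Mt Ux" "openin Mt Uy" "x \<in> Ux" "y \<in> Uy" "disjnt Ux Uy"
    using Haus xt yt \<open>x \<noteq> y\<close> unfolding Hausdorff_space_def by blast
  obtain Ux' where Ux': "openin Mt Ux'" "x \<in> Ux'" "Ux' \<subseteq> Ux" "inj_on D Ux'"
    using local_homeo_map_locally_injective[OF lh U(1,3)] .
  obtain Uy' where Uy': "openin Mt Uy'" "y \<in> Uy'" "Uy' \<subseteq> Uy" "inj_on D Uy'"
    using local_homeo_map_locally_injective[OF lh U(2,4)] .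
  have "openin (top_of_set X) (D ` Ux' \<inter> D ` Uy')"
    using local_homeo_map_open_image[OF lh Ux'(1)] local_homeo_map_open_image[OF lh Uy'(1)]
    by (rule openin_Int)
  moreover have "D x \<in> D ` Ux' \<inter> D ` Uy'" using Ux'(2) Uy'(2) eq by blast
  ultimately obtain N where N: "openin (top_of_set X) N" "D x \<in> N" "N \<subseteq> D ` Ux' \<inter> D ` Uy'"
      "connected (N \<inter> D ` V)"
    using lc[unfolded locally_connected_along_frontier_def, rule_format, OF z] by meson
  have "N \<inter> D ` V \<subseteq> D ` (Ux' \<inter> V)" "N \<inter> D ` V \<noteq> {}"
    using connected_chart_image_lifts_to_sheet[OF Ux'(1,4) N(1) _ N(4) Ux'(2) x N(2)] N(3) by auto
  moreover have "N \<inter> D ` V \<subseteq> D ` (Uy' \<inter> V)"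
    using connected_chart_image_lifts_to_sheet[OF Uy'(1,4) N(1) _ N(4) Uy'(2) y] N(2,3) eq by auto
  ultimately obtain h where "h \<in> D ` (Ux' \<inter> V)" "h \<in> D ` (Uy' \<inter> V)"
    by blast
  then obtain a b where "a \<in> Ux' \<inter> V" "b \<in> Uy' \<inter> V" "D a = D b" by blast
  with V(2) Ux'(3) Uy'(3) U(5) show False by (auto simp: disjnt_def dest: inj_onD)
qed

theorem injective_neighbourhood_of_chart_closure:
  assumes lc: "locally_connected_along_frontier X (D ` V)"
    and K: "compactin Mt (Mt closure_of V)"
  shows "\<exists>V'. openin Mt V' \<and> Mt closure_of V \<subseteq> V' \<and> inj_on D V'"
  using local_homeo_map_inj_on_neighbourhood_of_compact[OF lh K inj_on_closure_of_chart[OF lc]]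
  by blast

end

section \<open>Intersections of caps on a sphere\<close>

definition inversion :: "'a::real_inner \<Rightarrow> 'a \<Rightarrow> 'a" where
  "inversion q u = q + inverse ((norm (u - q))\<^sup>2) *\<^sub>R (u - q)"

lemma inversion_ne_centre: "u \<noteq> q \<Longrightarrow> inversion q u \<noteq> q"
  by (simp add: inversion_def)

lemma inversion_inversion:
  assumes "u \<noteq> q"
  shows "inversion q (inversion q u) = u"
proof -
  define e where "e = u - q"
  define k where "k = inverse ((norm e)\<^sup>2)"
  have k: "k > 0" "k * (norm e)\<^sup>2 = 1" using assms by (simp_all add: k_def e_def)
  have "(norm (k *\<^sub>R e))\<^sup>2 = k * (k * (norm e)\<^sup>2)"
    using k(1) by (simp add: power2_eq_square)
  then have "inverse ((norm (k *\<^sub>R e))\<^sup>2) * k = 1"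
    using k by (simp add: power2_eq_square ac_simps)
  then show ?thesis by (simp add: inversion_def k_def[symmetric] e_def[symmetric]) (simp add: e_def)
qed

lemma continuous_on_inversion: "q \<notin> S \<Longrightarrow> continuous_on S (inversion q)"
  unfolding inversion_def by (intro continuous_intros) auto

text \<open>Inversion in a point \<open>q\<close> of the sphere of radius \<open>r\<close> maps the sphere to a hyperplane ...\<close>

lemma norm_inversion_eq_iff:
  assumes q: "norm q = r" "r > 0" and u: "u \<noteq> q"
  shows "norm (inversion q u) = r \<longleftrightarrow> 2 * (q \<bullet> (u - q)) + 1 = 0"
proof -
  define e where "e = u - q"
  define k where "k = inverse ((norm e)\<^sup>2)"
  have k: "k > 0" "k * (norm e)\<^sup>2 = 1" using u by (simp_all add: k_def e_def)
  have "(norm (q + k *\<^sub>R e))\<^sup>2 = q \<bullet> q + 2 * k * (q \<bullet> e) + k * (k * (e \<bullet> e))"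
    by (simp add: power2_norm_eq_inner inner_add_left inner_add_right algebra_simps inner_commute)
  also have "\<dots> = r\<^sup>2 + k * (2 * (q \<bullet> e) + 1)"
    using q k by (simp add: power2_norm_eq_inner[symmetric] algebra_simps)
  finally have "norm (q + k *\<^sub>R e) = r \<longleftrightarrow> r\<^sup>2 + k * (2 * (q \<bullet> e) + 1) = r\<^sup>2"
    using q by (metis norm_ge_zero power2_eq_iff_nonneg less_imp_le)
  then show ?thesis using k by (simp add: inversion_def e_def k_def)
qed

text \<open>... and the open half-space \<open>l x > s\<close> with \<open>l q \<le> s\<close> to the interior of a ball.\<close>

lemma inversion_gt_iff:
  assumes l: "linear l" and u: "u \<noteq> q"
  shows "l (inversion q u) > s \<longleftrightarrow> (s - l q) * (norm (u - q))\<^sup>2 - l (u - q) < 0"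
proof -
  have np: "(norm (u - q))\<^sup>2 > 0" using u by simp
  have "l (inversion q u) = l q + l (u - q) / (norm (u - q))\<^sup>2"
    unfolding inversion_def using l by (simp add: linear_add linear_scale divide_inverse mult.commute)
  then have "l (inversion q u) > s \<longleftrightarrow> l (u - q) / (norm (u - q))\<^sup>2 > s - l q" by auto
  also have "\<dots> \<longleftrightarrow> l (u - q) > (s - l q) * (norm (u - q))\<^sup>2" using np by (simp add: pos_less_divide_eq)
  finally show ?thesis by simp
qed

lemma convex_on_norm_power2: "convex_on UNIV (\<lambda>x::'a::real_inner. (norm x)\<^sup>2)"
proof (rule convex_onI)
  fix t :: real and x y :: 'a
  have "(1 - t) * (norm x)\<^sup>2 + t * (norm y)\<^sup>2 - (norm ((1 - t) *\<^sub>R x + t *\<^sub>R y))\<^sup>2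
      = t * (1 - t) * (norm (x - y))\<^sup>2"
    by (simp add: power2_norm_eq_inner inner_add_left inner_add_right inner_diff_left
        inner_diff_right inner_commute algebra_simps)
  moreover assume "t > 0" "t < 1"
  ultimately show "(norm ((1 - t) *\<^sub>R x + t *\<^sub>R y))\<^sup>2 \<le> (1 - t) * (norm x)\<^sup>2 + t * (norm y)\<^sup>2"
    by (smt (verit) mult_nonneg_nonneg zero_le_power2)
qed simp

lemma convex_strict_sublevel:
  assumes "convex_on UNIV f"
  shows "convex {x. f x < c}"
proof (rule convexI)
  fix x y and a b :: real
  assume xy: "x \<in> {x. f x < c}" "y \<in> {x. f x < c}" and ab: "0 \<le> a" "0 \<le> b" "a + b = 1"
  then have b: "0 \<le> b" "b \<le> 1" and a: "a = 1 - b" by auto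
  have "f ((1 - b) *\<^sub>R x + b *\<^sub>R y) \<le> (1 - b) * f x + b * f y"
    using convex_onD[OF assms b] by simp
  then have "f (a *\<^sub>R x + b *\<^sub>R y) \<le> a * f x + b * f y"
    unfolding a .
  moreover have "a * f x + b * f y < a * c + b * c"
  proof (cases "a = 0")
    case True then show ?thesis using xy ab by simp
  next
    case False
    then have "a * f x < a * c" using xy ab by (simp add: mult_strict_left_mono)
    moreover have "b * f y \<le> b * c" using xy ab by (simp add: mult_left_mono)
    ultimately show ?thesis by linarith
  qed
  moreover have "a * c + b * c = c" using ab(3) by (metis distrib_right mult_1)
  ultimately show "a *\<^sub>R x + b *\<^sub>R y \<in> {x. f x < c}" by simp
qed

lemma convex_inverted_halfspace:
  fixes q :: "'a::real_inner"
  assumes l: "linear l" and m: "m \<ge> 0"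
  shows "convex {u. m * (norm (u - q))\<^sup>2 - l (u - q) < 0}"
proof (rule convex_strict_sublevel, rule convex_onI)
  fix t :: real and x y
  assume t: "t > 0" "t < 1"
  define e where "e = (1 - t) *\<^sub>R (x - q) + t *\<^sub>R (y - q)"
  have "(1 - t) *\<^sub>R x + t *\<^sub>R y - q = e"
    by (simp add: e_def algebra_simps)
  moreover have "(norm e)\<^sup>2 \<le> (1 - t) * (norm (x - q))\<^sup>2 + t * (norm (y - q))\<^sup>2"
    using convex_onD[OF convex_on_norm_power2, of t "x - q" "y - q"] t by (simp add: e_def)
  then have "m * (norm e)\<^sup>2 \<le> m * ((1 - t) * (norm (x - q))\<^sup>2 + t * (norm (y - q))\<^sup>2)"
    by (rule mult_left_mono[OF _ m])
  moreover have "l e = (1 - t) * l (x - q) + t * l (y - q)"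
    using l by (simp add: e_def linear_add linear_scale)
  ultimately show "m * (norm ((1 - t) *\<^sub>R x + t *\<^sub>R y - q))\<^sup>2 - l ((1 - t) *\<^sub>R x + t *\<^sub>R y - q)
      \<le> (1 - t) * (m * (norm (x - q))\<^sup>2 - l (x - q)) + t * (m * (norm (y - q))\<^sup>2 - l (y - q))"
    by (simp add: algebra_simps)
qed simp

definition inverted_caps :: "'a::real_inner \<Rightarrow> ('a \<Rightarrow> real) \<Rightarrow> real \<Rightarrow> ('a \<Rightarrow> real) \<Rightarrow> real \<Rightarrow> 'a set" where
  "inverted_caps q l1 s1 l2 s2 =
     {u. 2 * (q \<bullet> (u - q)) + 1 = 0 \<and> (s1 - l1 q) * (norm (u - q))\<^sup>2 - l1 (u - q) < 0
         \<and> (s2 - l2 q) * (norm (u - q))\<^sup>2 - l2 (u - q) < 0}"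

lemma centre_notin_inverted_caps: "q \<notin> inverted_caps q l1 s1 l2 s2"
  by (simp add: inverted_caps_def)

context
  fixes q :: "'a::real_inner" and r s1 s2 :: real and l1 l2 :: "'a \<Rightarrow> real"
  assumes q: "norm q = r" "r > 0" and l: "linear l1" "linear l2" and qs: "l1 q \<le> s1" "l2 q \<le> s2"
begin

lemma sphere_caps_eq_inversion_image:
  "{x. norm x = r \<and> l1 x > s1 \<and> l2 x > s2} = inversion q ` inverted_caps q l1 s1 l2 s2"
proof
  show "{x. norm x = r \<and> l1 x > s1 \<and> l2 x > s2} \<subseteq> inversion q ` inverted_caps q l1 s1 l2 s2"
  proof
    fix x assume x: "x \<in> {x. norm x = r \<and> l1 x > s1 \<and> l2 x > s2}"
    then have xq: "x \<noteq> q" using qs by auto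
    define u where "u = inversion q x"
    have uq: "u \<noteq> q" using inversion_ne_centre[OF xq] by (simp add: u_def)
    have ux: "inversion q u = x" using inversion_inversion[OF xq] by (simp add: u_def)
    have "u \<in> inverted_caps q l1 s1 l2 s2"
      using x norm_inversion_eq_iff[OF q uq] inversion_gt_iff[OF l(1) uq] inversion_gt_iff[OF l(2) uq] ux
      by (simp add: inverted_caps_def)
    then show "x \<in> inversion q ` inverted_caps q l1 s1 l2 s2" using ux by force
  qed
  show "inversion q ` inverted_caps q l1 s1 l2 s2 \<subseteq> {x. norm x = r \<and> l1 x > s1 \<and> l2 x > s2}"
  proof clarify
    fix u assume u: "u \<in> inverted_caps q l1 s1 l2 s2"
    then have uq: "u \<noteq> q" using centre_notin_inverted_caps by blast
    show "norm (inversion q u) = r \<and> s1 < l1 (inversion q u) \<and> s2 < l2 (inversion q u)"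
      using u norm_inversion_eq_iff[OF q uq] inversion_gt_iff[OF l(1) uq] inversion_gt_iff[OF l(2) uq]
      by (simp add: inverted_caps_def)
  qed
qed

lemma inverted_caps_eq:
  "inverted_caps q l1 s1 l2 s2 = {u. (2 *\<^sub>R q) \<bullet> u = 2 * (q \<bullet> q) - 1}
      \<inter> {u. (s1 - l1 q) * (norm (u - q))\<^sup>2 - l1 (u - q) < 0}
      \<inter> {u. (s2 - l2 q) * (norm (u - q))\<^sup>2 - l2 (u - q) < 0}"
  by (auto simp: inverted_caps_def inner_diff_right algebra_simps)

lemma convex_inverted_caps: "convex (inverted_caps q l1 s1 l2 s2)"
  unfolding inverted_caps_eq using qs
  by (intro convex_Int convex_hyperplane convex_inverted_halfspace l) auto

lemma connected_sphere_caps: "connected {x. norm x = r \<and> l1 x > s1 \<and> l2 x > s2}"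
  unfolding sphere_caps_eq_inversion_image
  by (intro connected_continuous_image[OF continuous_on_inversion] convex_connected
      convex_inverted_caps centre_notin_inverted_caps)

end

lemma linear_inner_right: "linear (\<lambda>x. c \<bullet> x)"
  by (rule bounded_linear_inner_right[THEN bounded_linear.linear])

lemma connected_sphere_caps_inner:
  fixes q c1 c2 :: "'a::real_inner"
  assumes "norm q = r" "r > 0" "c1 \<bullet> q \<le> s1" "c2 \<bullet> q \<le> s2"
  shows "connected {x. norm x = r \<and> c1 \<bullet> x > s1 \<and> c2 \<bullet> x > s2}"
  using connected_sphere_caps[OF assms(1,2) linear_inner_right linear_inner_right] assms(3,4) by simp

lemma open_inverted_halfspace:
  fixes q :: "'a::euclidean_space"
  assumes "linear l"
  shows "open {u. m * (norm (u - q))\<^sup>2 - l (u - q) < 0}"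
proof -
  have "continuous_on UNIV l"
    using assms by (simp add: linear_continuous_on linear_conv_bounded_linear)
  then have "continuous_on UNIV (\<lambda>u. l (u - q))"
    using continuous_on_compose2[of UNIV l UNIV "\<lambda>u. u - q"] by (simp add: continuous_intros)
  then have "continuous_on UNIV (\<lambda>u. m * (norm (u - q))\<^sup>2 - l (u - q))"
    by (intro continuous_intros)
  then show ?thesis
    by (rule open_Collect_less[OF _ continuous_on_const])
qed

text \<open>In dimension at least \<open>3\<close> the inverted caps form a convex set of dimension at least \<open>2\<close>,
  which stays connected when a point is removed.\<close>

lemma connected_sphere_caps_minus_point:
  fixes q :: "'a::euclidean_space" and l1 l2 :: "'a \<Rightarrow> real"
  assumes q: "norm q = r" "r > 0" and l: "linear l1" "linear l2" and qs: "l1 q \<le> s1" "l2 q \<le> s2"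
    and dim: "DIM('a) \<ge> 3" and p: "p \<in> {x. norm x = r \<and> l1 x > s1 \<and> l2 x > s2}"
  shows "connected ({x. norm x = r \<and> l1 x > s1 \<and> l2 x > s2} - {p})"
proof -
  let ?C = "inverted_caps q l1 s1 l2 s2"
  have pq: "p \<noteq> q" using p qs by auto
  define u0 where "u0 = inversion q p"
  have u0: "inversion q u0 = p" using inversion_inversion[OF pq] by (simp add: u0_def)
  obtain u where u: "u \<in> ?C" "p = inversion q u"
    using p unfolding sphere_caps_eq_inversion_image[OF assms(1-6)] by blast
  moreover have "u \<noteq> q" using u(1) centre_notin_inverted_caps by blast
  ultimately have u0C: "u0 \<in> ?C" by (simp add: u0_def inversion_inversion)
  have "inj_on (inversion q) ?C"
    by (rule inj_on_inverseI[of _ "inversion q"])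
      (metis centre_notin_inverted_caps inversion_inversion)
  then have "inversion q ` (?C - {u0}) = inversion q ` ?C - inversion q ` {u0}"
    by (rule inj_on_image_set_diff) (use u0C in auto)
  then have eq: "{x. norm x = r \<and> l1 x > s1 \<and> l2 x > s2} - {p} = inversion q ` (?C - {u0})"
    unfolding sphere_caps_eq_inversion_image[OF assms(1-6)] using u0 by simp
  have "aff_dim ?C = aff_dim {u. (2 *\<^sub>R q) \<bullet> u = 2 * (q \<bullet> q) - 1}"
    unfolding inverted_caps_eq[OF assms(1-6)] Int_assoc using u0C
    by (intro aff_dim_convex_Int_open convex_hyperplane open_Int open_inverted_halfspace l)
      (auto simp: inverted_caps_eq[OF assms(1-6)])
  also have "\<dots> = DIM('a) - 1"
    using aff_dim_hyperplane[of "2 *\<^sub>R q" "2 * (q \<bullet> q) - 1"] q by auto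
  finally have "aff_dim ?C \<noteq> 1" using dim by simp
  then have "connected (?C - {u0})"
    by (rule connected_punctured_convex[OF convex_inverted_caps[OF assms(1-6)]])
  moreover have "q \<notin> ?C - {u0}" using centre_notin_inverted_caps by blast
  ultimately show ?thesis
    unfolding eq by (metis connected_continuous_image continuous_on_inversion)
qed

lemma norm_diff_power2_sphere:
  fixes x y :: "'a::real_inner"
  assumes "norm x = r" "norm y = r"
  shows "(norm (x - y))\<^sup>2 = 2 * r\<^sup>2 - 2 * (x \<bullet> y)"
proof -
  have "(norm (x - y))\<^sup>2 = x \<bullet> x - 2 * (x \<bullet> y) + y \<bullet> y"
    by (simp add: power2_norm_eq_inner inner_diff_left inner_diff_right inner_commute)
  then show ?thesis using assms by (simp add: dot_square_norm)
qed

lemma locally_connected_along_frontier_hemisphere: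
  fixes l :: "'a::euclidean_space \<Rightarrow> real"
  assumes l: "linear l"
  shows "locally_connected_along_frontier (sphere 0 1) {v \<in> sphere 0 1. l v > 0}"
  unfolding locally_connected_along_frontier_def
proof (intro ballI allI impI)
  let ?H = "{v \<in> sphere 0 1. l v > 0}"
  fix z W assume z: "z \<in> sphere 0 1 \<inter> (closure ?H - ?H)"
    and W: "openin (top_of_set (sphere 0 1)) W" "z \<in> W"
  have "closed {v. 0 \<le> l v}"
    using l by (intro closed_Collect_le continuous_on_const linear_continuous_on)
      (simp add: linear_conv_bounded_linear)
  then have "closure ?H \<subseteq> {v. 0 \<le> l v}"
    by (intro closure_minimal) auto
  then have lz: "0 \<le> l z" using z by auto
  obtain T where T: "open T" "W = sphere 0 1 \<inter> T" using W(1) by (auto simp: openin_open)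
  obtain e where e: "e > 0" "ball z e \<subseteq> T" using T W(2) open_contains_ball by blast
  define s where "s = max 0 (1 - e\<^sup>2 / 4)"
  define N where "N = sphere 0 1 \<inter> {x. z \<bullet> x > s}"
  have nz: "norm z = 1" using z by simp
  show "\<exists>N. openin (top_of_set (sphere 0 1)) N \<and> z \<in> N \<and> N \<subseteq> W \<and> connected (N \<inter> ?H)"
  proof (intro exI conjI)
    show "openin (top_of_set (sphere 0 1)) N"
      unfolding N_def by (simp add: openin_open_Int open_halfspace_gt)
    show "z \<in> N" using nz e by (simp add: N_def s_def dot_square_norm)
    show "N \<subseteq> W"
    proof
      fix x assume x: "x \<in> N"
      then have "norm x = 1" "z \<bullet> x > 1 - e\<^sup>2 / 4" by (auto simp: N_def s_def)
      moreover have "e\<^sup>2 > 0" using e by simp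
      moreover have "(norm (z - x))\<^sup>2 = 2 - 2 * (z \<bullet> x)"
        using norm_diff_power2_sphere[OF nz \<open>norm x = 1\<close>] by simp
      ultimately have "(norm (z - x))\<^sup>2 < e\<^sup>2" by linarith
      then have "norm (z - x) < e" using e by (simp add: power2_less_imp_less)
      then show "x \<in> W" using e T x by (auto simp: N_def dist_norm)
    qed
    have "N \<inter> ?H = {x. norm x = 1 \<and> z \<bullet> x > s \<and> l x > 0}"
      by (auto simp: N_def)
    moreover have "connected {x. norm x = 1 \<and> z \<bullet> x > s \<and> l x > 0}"
      using nz lz l by (intro connected_sphere_caps[of "- z"] linear_inner_right)
        (auto simp: s_def dot_square_norm linear_neg)
    ultimately show "connected (N \<inter> ?H)" by simp
  qed
qed

section \<open>Minkowski patches\<close>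

lemma eq_of_inner_eq_norm_mult:
  fixes a x y :: "'a::real_inner"
  assumes "norm a = c" "c > 0" "norm x = r" "norm y = r" "a \<bullet> x = r * c" "a \<bullet> y = r * c"
  shows "x = y"
proof -
  have "c *\<^sub>R x = r *\<^sub>R a" "c *\<^sub>R y = r *\<^sub>R a"
    using norm_cauchy_schwarz_eq[of a x] norm_cauchy_schwarz_eq[of a y] assms by (simp_all add: mult.commute)
  then have "c *\<^sub>R x = c *\<^sub>R y" by simp
  then show ?thesis using assms(2) by simp
qed

text \<open>In the coordinates \<open>(x, y)\<close> of \<open>S\<^sup>p \<times> S\<^sup>q\<close> (spheres of radius \<open>r\<close>), this is the part of the
  product of the caps around \<open>x0\<close> and \<open>y0\<close> on the positive side of the lightlike vector \<open>(a, b)\<close>.\<close>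

definition patch_cap_pairs :: "'p::real_inner \<Rightarrow> 'q::real_inner \<Rightarrow> 'p \<Rightarrow> 'q \<Rightarrow> real \<Rightarrow> real \<Rightarrow> ('p \<times> 'q) set" where
  "patch_cap_pairs a b x0 y0 r s =
     {(x, y). norm x = r \<and> x0 \<bullet> x > s \<and> norm y = r \<and> y0 \<bullet> y > s \<and> a \<bullet> x > b \<bullet> y}"

text \<open>When \<open>x0\<close> points in the direction of \<open>a\<close>, the pairs are the sets \<open>{x0} \<times> C\<close> with
  \<open>C\<close> the cap around \<open>y0\<close> punctured at \<open>y0\<close>, together with the fibres \<open>A (b \<bullet> y) \<times> {y}\<close> over
  \<open>y \<in> C\<close>; every fibre is a connected cap containing \<open>x0\<close>.\<close>

lemma connected_patch_cap_pairs_extremal: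
  fixes a x0 :: "'p::euclidean_space" and b y0 :: "'q::euclidean_space"
  assumes r: "r > 0" and c: "c > 0" and na: "norm a = c" and nb: "norm b = c"
    and nx0: "norm x0 = r" and ny0: "norm y0 = r" and ax0: "a \<bullet> x0 = r * c" and by0: "b \<bullet> y0 = r * c"
    and s: "0 \<le> s" "s < r\<^sup>2" and dim: "DIM('q) \<ge> 3"
  shows "connected (patch_cap_pairs a b x0 y0 r s)"
proof -
  define C where "C = {y. norm y = r \<and> y0 \<bullet> y > s} - {y0}"
  define A where "A t = {x. norm x = r \<and> x0 \<bullet> x > s \<and> a \<bullet> x > t}" for t
  have y0y0: "y0 \<bullet> y0 = r\<^sup>2" and x0x0: "x0 \<bullet> x0 = r\<^sup>2"
    using ny0 nx0 by (simp_all add: dot_square_norm)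
  have "connected ({y. norm y = r \<and> y0 \<bullet> y > s \<and> y0 \<bullet> y > s} - {y0})"
    using ny0 r s dim y0y0
    by (intro connected_sphere_caps_minus_point[of "- y0"] linear_inner_right) auto
  then have conn_C: "connected C" by (simp add: C_def)
  have b_lt: "b \<bullet> y < r * c" if "norm y = r" "y \<noteq> y0" for y
    using Cauchy_Schwarz_ineq2[of b y] eq_of_inner_eq_norm_mult[OF nb c that(1) ny0 _ by0] that nb
    by (fastforce simp: mult.commute)
  have conn_A: "connected (A t)" if "t \<ge> - (r * c)" for t
    unfolding A_def using nx0 r s that x0x0 ax0 by (intro connected_sphere_caps_inner[of "- x0"]) auto
  have x0_A: "x0 \<in> A t" if "t < r * c" for t
    unfolding A_def using nx0 x0x0 s ax0 that by auto
  have "patch_cap_pairs a b x0 y0 r s \<subseteq> {x0} \<times> C \<union> \<Union>((\<lambda>y. A (b \<bullet> y) \<times> {y}) ` C)"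
  proof
    fix p assume "p \<in> patch_cap_pairs a b x0 y0 r s"
    then obtain x y where p: "p = (x, y)"
      and xy: "norm x = r" "x0 \<bullet> x > s" "norm y = r" "y0 \<bullet> y > s" "a \<bullet> x > b \<bullet> y"
      by (auto simp: patch_cap_pairs_def)
    have "a \<bullet> x \<le> r * c"
      using Cauchy_Schwarz_ineq2[of a x] na xy(1) by (simp add: mult.commute)
    then have "y \<noteq> y0" using xy(5) by0 by auto
    with xy show "p \<in> {x0} \<times> C \<union> \<Union>((\<lambda>y. A (b \<bullet> y) \<times> {y}) ` C)"
      unfolding p by (auto simp: A_def C_def)
  qed
  moreover have "{x0} \<times> C \<subseteq> patch_cap_pairs a b x0 y0 r s"
    using b_lt nx0 x0x0 s ax0 by (auto simp: C_def patch_cap_pairs_def)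
  moreover have "\<Union>((\<lambda>y. A (b \<bullet> y) \<times> {y}) ` C) \<subseteq> patch_cap_pairs a b x0 y0 r s"
    by (auto simp: A_def C_def patch_cap_pairs_def)
  ultimately have "patch_cap_pairs a b x0 y0 r s = {x0} \<times> C \<union> \<Union>((\<lambda>y. A (b \<bullet> y) \<times> {y}) ` C)"
    by blast
  moreover have "connected ({x0} \<times> C \<union> \<Union>((\<lambda>y. A (b \<bullet> y) \<times> {y}) ` C))"
  proof (rule connected_Un_UN)
    show "connected ({x0} \<times> C)" using conn_C by (simp add: connected_Times)
  next
    fix S assume "S \<in> (\<lambda>y. A (b \<bullet> y) \<times> {y}) ` C"
    then obtain y where y: "y \<in> C" "S = A (b \<bullet> y) \<times> {y}" by blast
    then have "norm y = r" "y \<noteq> y0" by (auto simp: C_def)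
    then have "- (r * c) \<le> b \<bullet> y" "b \<bullet> y < r * c"
      using Cauchy_Schwarz_ineq2[of b y] nb b_lt by (auto simp: mult.commute)
    then show "connected S" "{x0} \<times> C \<inter> S \<noteq> {}"
      using y conn_A x0_A by (auto simp: connected_Times)
  qed
  ultimately show ?thesis by simp
qed

text \<open>Slicing by a value \<open>t\<close> between \<open>b \<bullet> y\<close> and \<open>a \<bullet> x\<close> writes the pairs as the union of the
  products \<open>A t \<times> B t\<close>, decreasing resp. increasing in \<open>t\<close>, so any two of them meet. The bounds
  on \<open>s\<close> put a common point of the sphere outside both caps of \<open>A t\<close> (and of \<open>B t\<close>), which are
  therefore connected.\<close>

lemma connected_patch_cap_pairs_of_le:
  fixes a x0 :: "'p::euclidean_space" and b y0 :: "'q::euclidean_space"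
  assumes r: "r > 0" and c: "c > 0" and na: "norm a = c" and nb: "norm b = c"
    and nx0: "norm x0 = r" and ny0: "norm y0 = r"
    and s1: "- (r / c) * (a \<bullet> x0) \<le> s" and s2: "(r / c) * (b \<bullet> y0) \<le> s"
  shows "connected (patch_cap_pairs a b x0 y0 r s)"
proof -
  define A where "A t = {x. norm x = r \<and> x0 \<bullet> x > s \<and> a \<bullet> x > t}" for t
  define B where "B t = {y. norm y = r \<and> y0 \<bullet> y > s \<and> (- b) \<bullet> y > - t}" for t
  have aa: "a \<bullet> a = c\<^sup>2" and bb: "b \<bullet> b = c\<^sup>2"
    using na nb by (simp_all add: dot_square_norm)
  have conn_A: "connected (A t)" if "t \<ge> - (r * c)" for t
    unfolding A_def using na r c s1 that aa
    by (intro connected_sphere_caps_inner[of "- (r / c) *\<^sub>R a"]) (auto simp: inner_commute power2_eq_square)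
  have conn_B: "connected (B t)" if "t \<le> r * c" for t
    unfolding B_def using nb r c s2 that bb
    by (intro connected_sphere_caps_inner[of "(r / c) *\<^sub>R b"]) (auto simp: inner_commute power2_eq_square)
  define T where "T = {t. - (r * c) \<le> t \<and> t \<le> r * c \<and> A t \<noteq> {} \<and> B t \<noteq> {}}"
  have eq: "patch_cap_pairs a b x0 y0 r s = (\<Union>t\<in>T. A t \<times> B t)"
  proof
    show "patch_cap_pairs a b x0 y0 r s \<subseteq> (\<Union>t\<in>T. A t \<times> B t)"
    proof
      fix p assume "p \<in> patch_cap_pairs a b x0 y0 r s"
      then obtain x y where p: "p = (x, y)"
        and xy: "norm x = r" "x0 \<bullet> x > s" "norm y = r" "y0 \<bullet> y > s" "a \<bullet> x > b \<bullet> y"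
        by (auto simp: patch_cap_pairs_def)
      define t where "t = (a \<bullet> x + b \<bullet> y) / 2"
      have "x \<in> A t" "y \<in> B t" using xy by (auto simp: A_def B_def t_def)
      moreover have "- (r * c) \<le> t" "t \<le> r * c"
        using Cauchy_Schwarz_ineq2[of a x] Cauchy_Schwarz_ineq2[of b y] na nb xy
        by (auto simp: t_def abs_le_iff mult.commute)
      ultimately show "p \<in> (\<Union>t\<in>T. A t \<times> B t)" unfolding T_def p by blast
    qed
    show "(\<Union>t\<in>T. A t \<times> B t) \<subseteq> patch_cap_pairs a b x0 y0 r s"
      by (auto simp: A_def B_def patch_cap_pairs_def)
  qed
  show ?thesis
  proof (cases "T = {}")
    case True then show ?thesis using eq by simp
  next
    case False
    then obtain t1 where t1: "t1 \<in> T" by blast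
    have "connected (A t1 \<times> B t1 \<union> \<Union>((\<lambda>t. A t \<times> B t) ` T))"
    proof (rule connected_Un_UN)
      show "connected (A t1 \<times> B t1)"
        using t1 conn_A conn_B by (auto simp: T_def connected_Times)
    next
      fix S assume "S \<in> (\<lambda>t. A t \<times> B t) ` T"
      then obtain t where t: "t \<in> T" "S = A t \<times> B t" by blast
      then show "connected S"
        using conn_A conn_B by (auto simp: T_def connected_Times)
      have mono: "A t' \<subseteq> A t''" "B t'' \<subseteq> B t'" if "t'' \<le> t'" for t' t''
        using that by (auto simp: A_def B_def)
      have "A (max t t1) \<times> B (min t t1) \<subseteq> A t1 \<times> B t1 \<inter> S"
        using mono[of t1 "max t t1"] mono[of t "max t t1"] mono[of "min t t1" t1] mono[of "min t t1" t]
        by (auto simp: t(2))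
      moreover have "A (max t t1) \<times> B (min t t1) \<noteq> {}"
        using t(1) t1 by (auto simp: T_def max_def min_def)
      ultimately show "A t1 \<times> B t1 \<inter> S \<noteq> {}" by blast
    qed
    moreover have "A t1 \<times> B t1 \<union> \<Union>((\<lambda>t. A t \<times> B t) ` T) = (\<Union>t\<in>T. A t \<times> B t)"
      using t1 by blast
    ultimately show ?thesis using eq by simp
  qed
qed

lemma patch_cap_pairs_swap:
  "patch_cap_pairs a b x0 y0 r s = prod.swap ` patch_cap_pairs (- b) (- a) y0 x0 r s"
  by (auto simp: patch_cap_pairs_def image_iff)

lemma connected_patch_cap_pairs:
  fixes a x0 :: "'p::euclidean_space" and b y0 :: "'q::euclidean_space"
  assumes r: "r > 0" and c: "c > 0" and na: "norm a = c" and nb: "norm b = c"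
    and nx0: "norm x0 = r" and ny0: "norm y0 = r" and ab: "a \<bullet> x0 = b \<bullet> y0"
    and s: "0 \<le> s" "s < r\<^sup>2" "\<bar>a \<bullet> x0\<bar> < r * c \<longrightarrow> (r / c) * \<bar>a \<bullet> x0\<bar> \<le> s"
    and dim: "DIM('p) \<ge> 3" "DIM('q) \<ge> 3"
  shows "connected (patch_cap_pairs a b x0 y0 r s)"
proof -
  have "\<bar>a \<bullet> x0\<bar> \<le> r * c"
    using Cauchy_Schwarz_ineq2[of a x0] na nx0 by (simp add: mult.commute)
  then consider "a \<bullet> x0 = r * c" | "a \<bullet> x0 = - (r * c)" | "\<bar>a \<bullet> x0\<bar> < r * c" by linarith
  then show ?thesis
  proof cases
    case 1
    then show ?thesis
      using connected_patch_cap_pairs_extremal[OF r c na nb nx0 ny0 _ _ s(1,2) dim(2)] ab by simp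
  next
    case 2
    have "connected (patch_cap_pairs (- b) (- a) y0 x0 r s)"
      using nb na 2 ab by (intro connected_patch_cap_pairs_extremal[OF r c _ _ ny0 nx0 _ _ s(1,2) dim(1)]) auto
    then have "connected (prod.swap ` patch_cap_pairs (- b) (- a) y0 x0 r s)"
      by (rule connected_continuous_image[rotated]) (intro continuous_intros)
    then show ?thesis by (simp add: patch_cap_pairs_swap[symmetric])
  next
    case 3
    have rc: "r / c \<ge> 0" using r c by simp
    have "(r / c) * (- (a \<bullet> x0)) \<le> (r / c) * \<bar>a \<bullet> x0\<bar>"
      by (rule mult_left_mono[OF _ rc]) simp
    moreover have "(r / c) * (b \<bullet> y0) \<le> (r / c) * \<bar>a \<bullet> x0\<bar>"
      unfolding ab by (rule mult_left_mono[OF _ rc]) simp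
    ultimately show ?thesis
      using s(3) 3 by (intro connected_patch_cap_pairs_of_le[OF r c na nb nx0 ny0]) auto
  qed
qed

definition vec_inl :: "real^('a::finite + 'b::finite) \<Rightarrow> real^'a" where
  "vec_inl w = (\<chi> i. w $ Inl i)"

definition vec_inr :: "real^('a::finite + 'b::finite) \<Rightarrow> real^'b" where
  "vec_inr w = (\<chi> j. w $ Inr j)"

definition vec_join :: "real^'a::finite \<Rightarrow> real^'b::finite \<Rightarrow> real^('a + 'b)" where
  "vec_join x y = (\<chi> k. case k of Inl i \<Rightarrow> x $ i | Inr j \<Rightarrow> y $ j)"

lemma vec_inl_join [simp]: "vec_inl (vec_join x y) = x"
  by (simp add: vec_inl_def vec_join_def vec_eq_iff)

lemma vec_inr_join [simp]: "vec_inr (vec_join x y) = y"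
  by (simp add: vec_inr_def vec_join_def vec_eq_iff)

lemma vec_join_inl_inr [simp]: "vec_join (vec_inl w) (vec_inr w) = w"
  by (simp add: vec_inl_def vec_inr_def vec_join_def vec_eq_iff split: sum.split)

lemma vec_inl_diff: "vec_inl (w - z) = vec_inl w - vec_inl z"
  and vec_inr_diff: "vec_inr (w - z) = vec_inr w - vec_inr z"
  and vec_inl_uminus: "vec_inl (- w) = - vec_inl w"
  and vec_inr_uminus: "vec_inr (- w) = - vec_inr w"
  by (simp_all add: vec_inl_def vec_inr_def vec_eq_iff)

lemma inner_vec_split: "w \<bullet> w' = vec_inl w \<bullet> vec_inl w' + vec_inr w \<bullet> vec_inr w'"
proof -
  have "w \<bullet> w' = (\<Sum>k\<in>(UNIV::'a set) <+> (UNIV::'b set). w $ k * w' $ k)"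
    by (simp add: inner_vec_def)
  also have "\<dots> = (\<Sum>i\<in>UNIV. w $ Inl i * w' $ Inl i) + (\<Sum>j\<in>UNIV. w $ Inr j * w' $ Inr j)"
    by (subst sum.Plus) (auto simp: o_def)
  finally show ?thesis by (simp add: inner_vec_def vec_inl_def vec_inr_def)
qed

lemma norm_power2_vec_split: "(norm w)\<^sup>2 = (norm (vec_inl w))\<^sup>2 + (norm (vec_inr w))\<^sup>2"
  by (simp add: power2_norm_eq_inner inner_vec_split[of w w])

lemma ein_form_vec_split: "ein_form v w = vec_inl v \<bullet> vec_inl w - vec_inr v \<bullet> vec_inr w"
proof -
  have "(\<Sum>i\<in>range Inl. v $ i * w $ i) = (\<Sum>i\<in>(UNIV::'a set). v $ Inl i * w $ Inl i)"
    "(\<Sum>i\<in>range Inr. v $ i * w $ i) = (\<Sum>i\<in>(UNIV::'b set). v $ Inr i * w $ Inr i)"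
    by (subst sum.reindex; simp add: o_def)+
  then show ?thesis by (simp add: ein_form_def inner_vec_def vec_inl_def vec_inr_def)
qed

lemma ein_form_eq_inner: "ein_form v w = vec_join (vec_inl v) (- vec_inr v) \<bullet> w"
  by (simp add: ein_form_vec_split inner_vec_split)

lemma inner_vec_inl: "x \<bullet> vec_inl w = vec_join x 0 \<bullet> w"
  and inner_vec_inr: "y \<bullet> vec_inr w = vec_join 0 y \<bullet> w"
  by (simp_all add: inner_vec_split)

lemma continuous_on_vec_join: "continuous_on S (\<lambda>p. vec_join (fst p) (snd p))"
proof -
  have "linear (\<lambda>p. vec_join (fst p) (snd p))"
    by (rule linearI) (auto simp: vec_join_def vec_eq_iff split: sum.split)
  then show ?thesis
    by (intro linear_continuous_on linear_conv_bounded_linear[THEN iffD1])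
qed

lemma ein_tilde_iff:
  "w \<in> ein_tilde \<longleftrightarrow> norm (vec_inl w) = sqrt (1/2) \<and> norm (vec_inr w) = sqrt (1/2)"
proof -
  have norm_eq_iff: "norm x = c \<longleftrightarrow> (norm x)\<^sup>2 = c\<^sup>2" if "c \<ge> 0" for x :: "real^'c::finite" and c
    using power2_eq_iff_nonneg[OF norm_ge_zero[of x] that] by (rule sym)
  have "w \<in> ein_tilde \<longleftrightarrow> (norm (vec_inl w))\<^sup>2 - (norm (vec_inr w))\<^sup>2 = 0 \<and> (norm w)\<^sup>2 = 1"
    using norm_eq_iff[of 1 w] by (simp add: ein_tilde_def ein_form_vec_split dot_square_norm)
  also have "\<dots> \<longleftrightarrow> (norm (vec_inl w))\<^sup>2 = 1/2 \<and> (norm (vec_inr w))\<^sup>2 = 1/2"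
    unfolding norm_power2_vec_split by argo
  also have "\<dots> \<longleftrightarrow> norm (vec_inl w) = sqrt (1/2) \<and> norm (vec_inr w) = sqrt (1/2)"
    by (simp add: norm_eq_sqrt_inner)
  finally show ?thesis .
qed

lemma ein_tilde_cap_pairs_eq_image:
  "ein_tilde \<inter> {w. x0 \<bullet> vec_inl w > s \<and> y0 \<bullet> vec_inr w > s \<and> ein_form v w > 0}
     = (\<lambda>p. vec_join (fst p) (snd p)) ` patch_cap_pairs (vec_inl v) (vec_inr v) x0 y0 (sqrt (1/2)) s"
proof
  show "ein_tilde \<inter> {w. x0 \<bullet> vec_inl w > s \<and> y0 \<bullet> vec_inr w > s \<and> ein_form v w > 0}
      \<subseteq> (\<lambda>p. vec_join (fst p) (snd p)) ` patch_cap_pairs (vec_inl v) (vec_inr v) x0 y0 (sqrt (1/2)) s"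
  proof
    fix w assume "w \<in> ein_tilde \<inter> {w. x0 \<bullet> vec_inl w > s \<and> y0 \<bullet> vec_inr w > s \<and> ein_form v w > 0}"
    then have "(vec_inl w, vec_inr w) \<in> patch_cap_pairs (vec_inl v) (vec_inr v) x0 y0 (sqrt (1/2)) s"
      by (auto simp: patch_cap_pairs_def ein_tilde_iff ein_form_vec_split)
    then show "w \<in> (\<lambda>p. vec_join (fst p) (snd p)) ` patch_cap_pairs (vec_inl v) (vec_inr v) x0 y0 (sqrt (1/2)) s"
      by (rule rev_image_eqI) simp
  qed
  show "(\<lambda>p. vec_join (fst p) (snd p)) ` patch_cap_pairs (vec_inl v) (vec_inr v) x0 y0 (sqrt (1/2)) s
      \<subseteq> ein_tilde \<inter> {w. x0 \<bullet> vec_inl w > s \<and> y0 \<bullet> vec_inr w > s \<and> ein_form v w > 0}"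
    by (auto simp: patch_cap_pairs_def ein_tilde_iff ein_form_vec_split)
qed

text \<open>The neighbourhoods are products of caps around the two components of \<open>z\<close>, with the
  cap size \<open>s\<close> also large enough for the hypothesis of the connectedness lemma.\<close>

lemma vec_join_zero [simp]: "vec_join 0 0 = 0"
  by (simp add: vec_join_def vec_eq_iff split: sum.split)

lemma norm_vec_split_lightlike:
  assumes "v \<noteq> 0" "ein_form v v = 0"
  shows "norm (vec_inr v) = norm (vec_inl v)" "norm (vec_inl v) > 0"
proof -
  show eq: "norm (vec_inr v) = norm (vec_inl v)"
    using assms(2) by (simp add: ein_form_vec_split norm_eq_sqrt_inner)
  show "norm (vec_inl v) > 0"
  proof (rule ccontr)
    assume "\<not> norm (vec_inl v) > 0"
    then have "vec_inl v = 0" "vec_inr v = 0" using eq by auto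
    then have "v = 0" using vec_join_inl_inr[of v] by simp
    then show False using assms(1) by simp
  qed
qed

lemma norm_diff_power2_ein_tilde:
  assumes "z \<in> ein_tilde" "w \<in> ein_tilde"
  shows "(norm (z - w))\<^sup>2 = 2 - 2 * (vec_inl z \<bullet> vec_inl w) - 2 * (vec_inr z \<bullet> vec_inr w)"
  using assms norm_diff_power2_sphere[of "vec_inl z" "sqrt (1/2)" "vec_inl w"]
    norm_diff_power2_sphere[of "vec_inr z" "sqrt (1/2)" "vec_inr w"]
  by (simp add: ein_tilde_iff norm_power2_vec_split vec_inl_diff vec_inr_diff)

lemma ein_tilde_positive_side_locally_connected:
  fixes v z :: "real^('a::finite + 'b::finite)"
  assumes dims: "CARD('a) \<ge> 3" "CARD('b) \<ge> 3" and v: "v \<noteq> 0" "ein_form v v = 0"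
    and vz: "ein_form v z = 0" and z: "z \<in> ein_tilde"
    and W: "openin (top_of_set ein_tilde) W" "z \<in> W"
  obtains N where "openin (top_of_set ein_tilde) N" "z \<in> N" "N \<subseteq> W"
    "connected (N \<inter> {w \<in> ein_tilde. ein_form v w > 0})"
proof -
  define r where "r = sqrt (1/2::real)"
  define a where "a = vec_inl v"
  define b where "b = vec_inr v"
  define x0 where "x0 = vec_inl z"
  define y0 where "y0 = vec_inr z"
  define c where "c = norm a"
  have r: "r > 0" "r\<^sup>2 = 1/2" by (auto simp: r_def)
  have na: "norm a = c" and nb: "norm b = c" and c: "c > 0"
    using norm_vec_split_lightlike[OF v] by (simp_all add: a_def b_def c_def)
  have nx0: "norm x0 = r" and ny0: "norm y0 = r"
    using z by (simp_all add: ein_tilde_iff x0_def y0_def r_def)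
  have ab: "a \<bullet> x0 = b \<bullet> y0"
    using vz by (simp add: ein_form_vec_split a_def b_def x0_def y0_def)
  obtain e where e: "e > 0" "ein_tilde \<inter> ball z e \<subseteq> W"
    using W by (force simp: openin_contains_ball)
  define s0 where "s0 = (if \<bar>a \<bullet> x0\<bar> < r * c then (r / c) * \<bar>a \<bullet> x0\<bar> else 0)"
  have s0: "0 \<le> s0" "s0 < r\<^sup>2"
  proof -
    have "(r / c) * \<bar>a \<bullet> x0\<bar> < (r / c) * (r * c)" if "\<bar>a \<bullet> x0\<bar> < r * c"
      using that r c by (intro mult_strict_left_mono) auto
    then show "0 \<le> s0" "s0 < r\<^sup>2"
      using r c by (auto simp: s0_def power2_eq_square)
  qed
  define s where "s = max s0 (r\<^sup>2 - e\<^sup>2 / 8)"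
  have s: "0 \<le> s" "s < r\<^sup>2" "r\<^sup>2 - e\<^sup>2 / 8 \<le> s" "\<bar>a \<bullet> x0\<bar> < r * c \<longrightarrow> (r / c) * \<bar>a \<bullet> x0\<bar> \<le> s"
    using s0 e by (auto simp: s_def s0_def)
  define N where "N = ein_tilde \<inter> {w. x0 \<bullet> vec_inl w > s \<and> y0 \<bullet> vec_inr w > s}"
  show thesis
  proof
    have "open {w. x0 \<bullet> vec_inl w > s \<and> y0 \<bullet> vec_inr w > s}"
      unfolding inner_vec_inl inner_vec_inr Collect_conj_eq by (intro open_Int open_halfspace_gt)
    then show "openin (top_of_set ein_tilde) N"
      unfolding N_def by (rule openin_open_Int)
    show "z \<in> N"
      using z nx0 ny0 s(2) by (simp add: N_def x0_def y0_def dot_square_norm)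
    have "e\<^sup>2 > 0" using e(1) by simp
    show "N \<subseteq> W"
    proof
      fix w assume w: "w \<in> N"
      then have "(norm (z - w))\<^sup>2 = 2 - 2 * (x0 \<bullet> vec_inl w) - 2 * (y0 \<bullet> vec_inr w)"
        "x0 \<bullet> vec_inl w > s" "y0 \<bullet> vec_inr w > s"
        using norm_diff_power2_ein_tilde[OF z] by (auto simp: N_def x0_def y0_def)
      then have "(norm (z - w))\<^sup>2 < e\<^sup>2"
        using s(3) r(2) \<open>e\<^sup>2 > 0\<close> by linarith
      then have "norm (z - w) < e"
        using e(1) by (simp add: power2_less_imp_less)
      then show "w \<in> W" using w e(2) by (auto simp: N_def dist_norm)
    qed
    have "N \<inter> {w \<in> ein_tilde. ein_form v w > 0}
        = ein_tilde \<inter> {w. x0 \<bullet> vec_inl w > s \<and> y0 \<bullet> vec_inr w > s \<and> ein_form v w > 0}"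
      by (auto simp: N_def)
    also have "\<dots> = (\<lambda>p. vec_join (fst p) (snd p)) ` patch_cap_pairs a b x0 y0 r s"
      by (simp only: ein_tilde_cap_pairs_eq_image a_def b_def r_def)
    finally have eq: "N \<inter> {w \<in> ein_tilde. ein_form v w > 0}
        = (\<lambda>p. vec_join (fst p) (snd p)) ` patch_cap_pairs a b x0 y0 r s" .
    have "connected (patch_cap_pairs a b x0 y0 r s)"
      by (rule connected_patch_cap_pairs[OF r(1) c na nb nx0 ny0 ab s(1,2,4)]) (simp_all add: dims)
    then show "connected (N \<inter> {w \<in> ein_tilde. ein_form v w > 0})"
      unfolding eq by (rule connected_continuous_image[OF continuous_on_vec_join])
  qed
qed

lemma ein_form_uminus_left: "ein_form (- v) w = - ein_form v w"
  and ein_form_uminus_right: "ein_form v (- w) = - ein_form v w"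
  by (simp_all add: ein_form_vec_split vec_inl_uminus vec_inr_uminus)

lemma continuous_on_ein_form: "continuous_on S (ein_form v)"
  unfolding ein_form_eq_inner by (intro continuous_intros)

lemma minkowski_patch_positive_side:
  fixes v :: "real^('a::finite + 'b::finite)"
  assumes v: "v \<noteq> 0" "ein_form v v = 0"
    and P: "P \<in> components {w \<in> ein_tilde. ein_form v w \<noteq> 0}"
  obtains v' where "v' \<noteq> 0" "ein_form v' v' = 0"
    "{w \<in> ein_tilde. ein_form v' w \<noteq> 0} = {w \<in> ein_tilde. ein_form v w \<noteq> 0}"
    "P \<subseteq> {w \<in> ein_tilde. ein_form v' w > 0}"
proof -
  have "connected P" "P \<subseteq> {w \<in> ein_tilde. ein_form v w \<noteq> 0}"
    using P by (auto simp: in_components_connected in_components_subset)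
  have "(\<forall>w\<in>P. ein_form v w > 0) \<or> (\<forall>w\<in>P. ein_form v w < 0)"
  proof (rule ccontr)
    assume "\<not> ?thesis"
    then obtain w1 w2 where w: "w1 \<in> P" "w2 \<in> P" "ein_form v w1 \<le> 0" "ein_form v w2 \<ge> 0"
      by force
    have "connected (ein_form v ` P)"
      by (rule connected_continuous_image[OF continuous_on_ein_form \<open>connected P\<close>])
    then have "0 \<in> ein_form v ` P"
      by (rule connectedD_interval) (use w in auto)
    then show False using \<open>P \<subseteq> _\<close> by auto
  qed
  then show thesis
  proof
    assume "\<forall>w\<in>P. ein_form v w > 0"
    then show thesis using that[of v] v \<open>P \<subseteq> _\<close> by blast
  next
    assume "\<forall>w\<in>P. ein_form v w < 0"
    then show thesis
      using that[of "- v"] v \<open>P \<subseteq> _\<close> by (auto simp: ein_form_uminus_left ein_form_uminus_right)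
  qed
qed

text \<open>A component of the open set \<open>{\<langle>v, w\<rangle> \<noteq> 0}\<close> is closed in it, so its frontier points lie on
  \<open>{\<langle>v, w\<rangle> = 0}\<close>.\<close>

lemma locally_connected_along_frontier_minkowski_patch:
  fixes v :: "real^('a::finite + 'b::finite)"
  assumes dims: "CARD('a) \<ge> 3" "CARD('b) \<ge> 3" and v: "v \<noteq> 0" "ein_form v v = 0"
    and P: "P \<in> components {w \<in> ein_tilde. ein_form v w \<noteq> 0}"
  shows "locally_connected_along_frontier ein_tilde P"
  unfolding locally_connected_along_frontier_def
proof (intro ballI allI impI)
  fix z W assume z: "z \<in> ein_tilde \<inter> (closure P - P)"
    and W: "openin (top_of_set ein_tilde) W" "z \<in> W"
  obtain v' where v': "v' \<noteq> 0" "ein_form v' v' = 0"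
      "{w \<in> ein_tilde. ein_form v' w \<noteq> 0} = {w \<in> ein_tilde. ein_form v w \<noteq> 0}"
      "P \<subseteq> {w \<in> ein_tilde. ein_form v' w > 0}"
    using minkowski_patch_positive_side[OF v P] by blast
  let ?O = "{w \<in> ein_tilde. ein_form v' w \<noteq> 0}"
  let ?S = "{w \<in> ein_tilde. ein_form v' w > 0}"
  have P': "P \<in> components ?O" using P v'(3) by simp
  have "ein_form v' z = 0"
  proof (rule ccontr)
    assume "ein_form v' z \<noteq> 0"
    then have "z \<in> ?O" using z by simp
    moreover obtain T where "closed T" "P = ?O \<inter> T"
      using closedin_component[OF P'] by (auto simp: closedin_closed)
    moreover from this have "closure P \<subseteq> T" by (intro closure_minimal) auto
    ultimately show False using z by auto
  qed
  then obtain N where N: "openin (top_of_set ein_tilde) N" "z \<in> N" "N \<subseteq> W" "connected (N \<inter> ?S)"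
    using ein_tilde_positive_side_locally_connected[OF dims v'(1,2) _ _ W] z by blast
  have "connected (N \<inter> P)"
  proof (cases "P \<inter> (N \<inter> ?S) = {}")
    case True
    then have "N \<inter> P = {}" using v'(4) by blast
    then show ?thesis by simp
  next
    case False
    then have "N \<inter> ?S \<subseteq> P"
      by (intro components_maximal[OF P' N(4)]) auto
    then have "N \<inter> P = N \<inter> ?S" using v'(4) by blast
    then show ?thesis using N(4) by simp
  qed
  then show "\<exists>N. openin (top_of_set ein_tilde) N \<and> z \<in> N \<and> N \<subseteq> W \<and> connected (N \<inter> P)"
    using N by blast
qed

lemma hemisphere_chart_closure_injective_neighbourhood:
  fixes D :: "'m \<Rightarrow> real^'n"
  assumes dev: "dev_data Mt M p D (sphere 0 1) G" and chart: "max_chart Mt p D hemispheres V"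
    and K: "compactin Mt (Mt closure_of V)"
  shows "\<exists>V'. openin Mt V' \<and> Mt closure_of V \<subseteq> V' \<and> inj_on D V'"
proof -
  obtain l :: "real^'n \<Rightarrow> real" where "linear l" "D ` V = {v \<in> sphere 0 1. l v > 0}"
    using chart by (auto simp: max_chart_def hemispheres_def)
  then show ?thesis
    using dev chart K locally_connected_along_frontier_hemisphere
    by (intro injective_neighbourhood_of_chart_closure) (auto simp: dev_data_def max_chart_def)
qed

lemma minkowski_chart_closure_injective_neighbourhood:
  fixes D :: "'m \<Rightarrow> real^('a::finite + 'b::finite)"
  assumes dims: "CARD('a) \<ge> 3" "CARD('b) \<ge> 3"
    and dev: "dev_data Mt M p D ein_tilde G" and chart: "max_chart Mt p D minkowski_patches V"
    and K: "compactin Mt (Mt closure_of V)"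
  shows "\<exists>V'. openin Mt V' \<and> Mt closure_of V \<subseteq> V' \<and> inj_on D V'"
proof -
  obtain v where "v \<noteq> 0" "ein_form v v = 0" "D ` V \<in> components {w \<in> ein_tilde. ein_form v w \<noteq> 0}"
    using chart by (auto simp: max_chart_def minkowski_patches_def)
  then show ?thesis
    using dev chart K locally_connected_along_frontier_minkowski_patch[OF dims]
    by (intro injective_neighbourhood_of_chart_closure) (auto simp: dev_data_def max_chart_def)
qed

theorem lemma3p9:
  shows
  "(\<forall>(Mt :: 'm topology) (M :: 'c topology) p (D :: 'm \<Rightarrow> real^'n) V.
      CARD('n) \<ge> 3 \<and> dev_data Mt M p D (sphere 0 1) proj_group \<and>
      max_chart Mt p D hemispheres V \<and> compactin Mt (Mt closure_of V) \<longrightarrow>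
      (\<exists>V'. openin Mt V' \<and> Mt closure_of V \<subseteq> V' \<and> inj_on D V'))
   \<and>
   (\<forall>(Mt :: 'm topology) (M :: 'c topology) p (D :: 'm \<Rightarrow> real^('a::finite + 'b::finite)) V.
      CARD('a) \<ge> 3 \<and> CARD('b) \<ge> 3 \<and> dev_data Mt M p D ein_tilde ein_group \<and>
      max_chart Mt p D minkowski_patches V \<and> compactin Mt (Mt closure_of V) \<longrightarrow>
      (\<exists>V'. openin Mt V' \<and> Mt closure_of V \<subseteq> V' \<and> inj_on D V'))"
proof (intro conjI allI impI)
  fix Mt :: "'m topology" and M :: "'c topology" and p and D :: "'m \<Rightarrow> real^'n" and V
  assume "CARD('n) \<ge> 3 \<and> dev_data Mt M p D (sphere 0 1) proj_group \<and>
    max_chart Mt p D hemispheres V \<and> compactin Mt (Mt closure_of V)"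
  then show "\<exists>V'. openin Mt V' \<and> Mt closure_of V \<subseteq> V' \<and> inj_on D V'"
    by (elim conjE) (rule hemisphere_chart_closure_injective_neighbourhood)
next
  fix Mt :: "'m topology" and M :: "'c topology" and p and D :: "'m \<Rightarrow> real^('a + 'b)" and V
  assume "CARD('a) \<ge> 3 \<and> CARD('b) \<ge> 3 \<and> dev_data Mt M p D ein_tilde ein_group \<and>
    max_chart Mt p D minkowski_patches V \<and> compactin Mt (Mt closure_of V)"
  then show "\<exists>V'. openin Mt V' \<and> Mt closure_of V \<subseteq> V' \<and> inj_on D V'"
    by (elim conjE) (rule minkowski_chart_closure_injective_neighbourhood)
qed

end
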